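(* Let $(U,\mathrm{dist})$ be a metric space, $\gamma>0$, $\eta>0$, $\Lambda\in\mathbb{R}_{>0}\cup\{\infty\}$, $\nu>1$. Let $f:U\to\mathbb{R}$ and let $B(\cdot)$ be a $g_E$-smooth upper bound on $\mathrm{L}_{f,\Lambda}$, where $g_E(x,x')=e^{\gamma\,\mathrm{dist}(x,x')}$. Then the mechanism $M$ which on input $x$ releases $M(x)=f(x)+\frac{B(x)}{\eta}Z$ with $Z\sim\mathcal{T}_\nu(0,1)$ is $(\varepsilon,0,\Lambda)$-GP, where $\varepsilon=\nu\gamma+\frac{\nu+1}{2\sqrt{\nu}}\eta$.
   Context: $\mathrm{L}_{f,\Lambda}(x)$ is the infimum of all $K$ such that $|f(x)-f(x')|\le K\,\mathrm{dist}(x,x')$ for all $x'\in U$ with $\mathrm{dist}(x,x')\le\Lambda$. A $g$-smooth upper bound on $\mathrm{L}_{f,\Lambda}$ is $B:U\to\mathbb{R}_{\ge0}$ with (1) $B(x)\ge\mathrm{L}_{f,\Lambda}(x)$ for all $x$ and (2) $B(x)\le g(x,x')B(x')$ for all $x,x'\in U$. $\mathcal{T}_\nu(0,1)$ is Student's $t$-distribution with $\nu$ degrees of freedom, density $\frac{c_\nu}{\sqrt\nu}(1+y^2/\nu)^{-(\nu+1)/2}$, $c_\nu=\frac{\Gamma((\nu+1)/2)}{\sqrt\pi\,\Gamma(\nu/2)}$. A mechanism $M$ with outputs in $\mathbb{R}$ is $(\varepsilon,\delta,\Lambda)$-GP if for every measurable $S\subseteq\mathbb{R}$ and all $x,x'$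 with $\mathrm{dist}(x,x')\le\Lambda$: $\Pr[M(x)\in S]\le e^{\varepsilon\,\mathrm{dist}(x,x')}\Pr[M(x')\in S]+\delta$. *)

theory Defs
  imports "HOL-Probability.Probability"
begin

text \<open>Local Lipschitz constant L_{f,Lambda}(x) on the domain U (as an extended real;
  the infimum of the empty set is +infinity).\<close>
definition local_lip :: "'a::metric_space set \<Rightarrow> ('a \<Rightarrow> real) \<Rightarrow> ereal \<Rightarrow> 'a \<Rightarrow> ereal" where
  "local_lip U f Lam x = Inf {ereal K | K. \<forall>x'\<in>U. ereal (dist x x') \<le> Lam \<longrightarrow>
                                      \<bar>f x - f x'\<bar> \<le> K * dist x x'}"

definition smooth_upper_bound ::
  "'a::metric_space set \<Rightarrow> ('a \<Rightarrow> 'a \<Rightarrow> real) \<Rightarrow> ('a \<Rightarrow> real) \<Rightarrow> ereal \<Rightarrow> ('a \<Rightarrow> real) \<Rightarrow> bool" where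
  "smooth_upper_bound U g f Lam B \<longleftrightarrow>
     (\<forall>x\<in>U. B x \<ge> 0) \<and>
     (\<forall>x\<in>U. ereal (B x) \<ge> local_lip U f Lam x) \<and>
     (\<forall>x\<in>U. \<forall>x'\<in>U. B x \<le> g x x' * B x')"

definition student_t_const :: "real \<Rightarrow> real" where
  "student_t_const \<nu> = Gamma ((\<nu> + 1) / 2) / (sqrt pi * Gamma (\<nu> / 2))"

definition student_t_density :: "real \<Rightarrow> real \<Rightarrow> real" where
  "student_t_density \<nu> y =
     student_t_const \<nu> / sqrt \<nu> * (1 + y\<^sup>2 / \<nu>) powr (-(\<nu> + 1) / 2)"

definition student_t :: "real \<Rightarrow> real measure" where
  "student_t \<nu> = density lborel (\<lambda>y. ennreal (student_t_density \<nu> y))"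

definition GP :: "'a::metric_space set \<Rightarrow> ('a \<Rightarrow> real measure) \<Rightarrow> real \<Rightarrow> real \<Rightarrow> ereal \<Rightarrow> bool" where
  "GP U M \<epsilon> \<delta> Lam \<longleftrightarrow>
     (\<forall>S \<in> sets borel. \<forall>x\<in>U. \<forall>x'\<in>U. ereal (dist x x') \<le> Lam \<longrightarrow>
        measure (M x) S \<le> exp (\<epsilon> * dist x x') * measure (M x') S + \<delta>)"

definition t_mechanism :: "('a \<Rightarrow> real) \<Rightarrow> ('a \<Rightarrow> real) \<Rightarrow> real \<Rightarrow> real \<Rightarrow> 'a \<Rightarrow> real measure" where
  "t_mechanism f B \<eta> \<nu> x = distr (student_t \<nu>) borel (\<lambda>z. f x + B x / \<eta> * z)"

end

theory Submission
  imports Defs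
begin

text \<open>The output of the mechanism at \<open>x\<close> has Lebesgue density
  \<open>y \<mapsto> p ((y - f x) / s) / s\<close> with \<open>s = B x / \<eta>\<close> and \<open>p\<close> the Student t density, so it
  suffices to compare two such densities pointwise. The log-density \<open>-(\<nu> + 1)/2 * ln (1 + y\<^sup>2/\<nu>)\<close>
  is \<open>(\<nu> + 1)/(2 sqrt \<nu>)\<close>-Lipschitz, so moving the location by
  \<open>\<bar>f x - f x'\<bar> \<le> B x * dist x x'\<close> costs a factor \<open>exp ((\<nu> + 1)/(2 sqrt \<nu>) * \<eta> * dist x x')\<close>;
  changing the scale by a factor at most \<open>r \<ge> 1\<close> costs a factor \<open>r powr \<nu>\<close>, and the smoothness
  of \<open>B\<close> gives \<open>r = exp (\<gamma> * dist x x')\<close>.\<close>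

lemma ln_one_plus_square_div_lipschitz:
  fixes \<nu> u v :: real
  assumes "\<nu> > 0"
  shows "\<bar>ln (1 + u\<^sup>2 / \<nu>) - ln (1 + v\<^sup>2 / \<nu>)\<bar> \<le> \<bar>u - v\<bar> / sqrt \<nu>"
proof -
  have pos: "1 + z\<^sup>2 / \<nu> > 0" for z :: real
    using assms by (simp add: add_pos_nonneg)
  have deriv: "((\<lambda>z. ln (1 + z\<^sup>2 / \<nu>)) has_field_derivative 2 * z / (\<nu> + z\<^sup>2)) (at z within UNIV)"
    for z :: real
    using pos[of z] assms by (auto intro!: derivative_eq_intros simp: field_simps)
  have "norm (2 * z / (\<nu> + z\<^sup>2)) \<le> 1 / sqrt \<nu>" for z :: real
  proof -
    have "0 \<le> (sqrt \<nu> - \<bar>z\<bar>)\<^sup>2" by simp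
    then have "2 * \<bar>z\<bar> * sqrt \<nu> \<le> \<nu> + z\<^sup>2"
      using assms by (simp add: power2_eq_square algebra_simps)
    then show ?thesis
      using assms by (simp add: abs_divide divide_simps add_pos_nonneg mult.commute)
  qed
  then have "norm (ln (1 + u\<^sup>2 / \<nu>) - ln (1 + v\<^sup>2 / \<nu>)) \<le> 1 / sqrt \<nu> * norm (u - v)"
    by (intro field_differentiable_bound[OF convex_UNIV deriv]) auto
  then show ?thesis by simp
qed

lemma student_t_const_nonneg: "\<nu> > 0 \<Longrightarrow> student_t_const \<nu> \<ge> 0"
  unfolding student_t_const_def by (auto intro!: divide_nonneg_nonneg less_imp_le Gamma_real_pos)

lemma student_t_density_nonneg: "\<nu> > 0 \<Longrightarrow> student_t_density \<nu> y \<ge> 0"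
  unfolding student_t_density_def by (simp add: student_t_const_nonneg)

lemma borel_measurable_student_t_density [measurable]:
  "student_t_density \<nu> \<in> borel_measurable borel"
  unfolding student_t_density_def by measurable

lemma student_t_density_shift_le:
  fixes \<nu> u v :: real
  assumes "\<nu> > 0"
  shows "student_t_density \<nu> u \<le> exp ((\<nu> + 1) / (2 * sqrt \<nu>) * \<bar>u - v\<bar>) * student_t_density \<nu> v"
proof -
  define k where "k = (\<nu> + 1) / 2"
  have pos: "1 + z\<^sup>2 / \<nu> > 0" for z :: real
    using assms by (simp add: add_pos_nonneg)
  have kernel: "(1 + z\<^sup>2 / \<nu>) powr (-(\<nu> + 1) / 2) = exp (- k * ln (1 + z\<^sup>2 / \<nu>))" for z :: real
    using pos[of z] by (simp add: powr_def k_def algebra_simps)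
  have "ln (1 + v\<^sup>2 / \<nu>) - ln (1 + u\<^sup>2 / \<nu>) \<le> \<bar>u - v\<bar> / sqrt \<nu>"
    using ln_one_plus_square_div_lipschitz[OF assms, of u v] by linarith
  then have "k * (ln (1 + v\<^sup>2 / \<nu>) - ln (1 + u\<^sup>2 / \<nu>)) \<le> k * (\<bar>u - v\<bar> / sqrt \<nu>)"
    using assms by (intro mult_left_mono) (auto simp: k_def)
  then have "- k * ln (1 + u\<^sup>2 / \<nu>) \<le> k * (\<bar>u - v\<bar> / sqrt \<nu>) + - k * ln (1 + v\<^sup>2 / \<nu>)"
    by (simp add: algebra_simps)
  then have "exp (- k * ln (1 + u\<^sup>2 / \<nu>))
      \<le> exp ((\<nu> + 1) / (2 * sqrt \<nu>) * \<bar>u - v\<bar>) * exp (- k * ln (1 + v\<^sup>2 / \<nu>))"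
    by (simp add: k_def exp_add[symmetric])
  moreover have "student_t_const \<nu> / sqrt \<nu> \<ge> 0"
    using student_t_const_nonneg[OF assms] assms by simp
  ultimately show ?thesis
    unfolding student_t_density_def kernel by (metis mult_left_mono mult.left_commute)
qed

lemma student_t_density_antimono:
  fixes \<nu> u v :: real
  assumes "\<nu> > 0" "\<bar>u\<bar> \<le> \<bar>v\<bar>"
  shows "student_t_density \<nu> v \<le> student_t_density \<nu> u"
proof -
  have "1 + u\<^sup>2 / \<nu> \<le> 1 + v\<^sup>2 / \<nu>"
    using assms by (simp add: abs_le_square_iff divide_right_mono)
  then have "(1 + v\<^sup>2 / \<nu>) powr (-(\<nu> + 1) / 2) \<le> (1 + u\<^sup>2 / \<nu>) powr (-(\<nu> + 1) / 2)"
    using assms by (intro powr_mono2') (auto simp: add_pos_nonneg)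
  then show ?thesis
    unfolding student_t_density_def using student_t_const_nonneg[of \<nu>] assms
    by (intro mult_left_mono) auto
qed

lemma student_t_density_le_scaled:
  fixes \<nu> s z :: real
  assumes "\<nu> > 0" "s \<ge> 1"
  shows "student_t_density \<nu> z \<le> s powr (\<nu> + 1) * student_t_density \<nu> (s * z)"
proof -
  define k where "k = (\<nu> + 1) / 2"
  have "1 + (s * z)\<^sup>2 / \<nu> \<le> s\<^sup>2 * (1 + z\<^sup>2 / \<nu>)"
    using assms one_le_power[of s 2] by (simp add: power_mult_distrib field_simps)
  then have "(s\<^sup>2 * (1 + z\<^sup>2 / \<nu>)) powr (- k) \<le> (1 + (s * z)\<^sup>2 / \<nu>) powr (- k)"
    using assms by (intro powr_mono2') (auto simp: k_def add_pos_nonneg)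
  moreover have "(s\<^sup>2 * (1 + z\<^sup>2 / \<nu>)) powr (- k) = (1 + z\<^sup>2 / \<nu>) powr (- k) / s powr (\<nu> + 1)"
    using assms add_pos_nonneg[of 1 "z\<^sup>2 / \<nu>"] unfolding k_def
    by (simp add: powr_mult power2_eq_square powr_minus_divide flip: powr_add)
  ultimately have "(1 + z\<^sup>2 / \<nu>) powr (- k) \<le> s powr (\<nu> + 1) * (1 + (s * z)\<^sup>2 / \<nu>) powr (- k)"
    using assms by (simp add: pos_divide_le_eq mult.commute)
  from mult_left_mono[OF this, of "student_t_const \<nu> / sqrt \<nu>"] show ?thesis
    unfolding student_t_density_def k_def minus_divide_left
    using student_t_const_nonneg[of \<nu>] assms by (simp add: mult_ac)
qed

lemma student_t_density_scale_le:
  fixes \<nu> b b' r t :: real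
  assumes "\<nu> \<ge> 1" "b > 0" "b' > 0" "b \<le> r * b'" "b' \<le> r * b"
  shows "student_t_density \<nu> (t / b) / b \<le> r powr \<nu> * (student_t_density \<nu> (t / b') / b')"
proof (cases "b \<le> b'")
  case True
  have "r \<ge> 1"
    using True assms mult_le_cancel_right_pos[of b 1 r] by linarith
  have "\<bar>t / b'\<bar> \<le> \<bar>t / b\<bar>"
    using True assms by (simp add: abs_divide divide_left_mono)
  then have "student_t_density \<nu> (t / b) / b \<le> student_t_density \<nu> (t / b') / b"
    using assms by (intro divide_right_mono student_t_density_antimono) auto
  also have "\<dots> \<le> r * (student_t_density \<nu> (t / b') / b')"
    using mult_right_mono[OF assms(5) student_t_density_nonneg[of \<nu> "t / b'"]] assms
    by (simp add: field_simps)
  also have "\<dots> \<le> r powr \<nu> * (student_t_density \<nu> (t / b') / b')"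
    using powr_mono[of 1 \<nu> r] \<open>r \<ge> 1\<close> assms student_t_density_nonneg[of \<nu> "t / b'"]
    by (intro mult_right_mono) auto
  finally show ?thesis .
next
  case False
  define s where "s = b / b'"
  have s: "1 < s" "s \<le> r"
    using False assms by (auto simp: s_def field_simps)
  have "student_t_density \<nu> (t / b) / b \<le> s powr (\<nu> + 1) * student_t_density \<nu> (s * (t / b)) / b"
    using student_t_density_le_scaled[of \<nu> s "t / b"] s assms by (simp add: divide_right_mono)
  also have "\<dots> = s powr \<nu> * (student_t_density \<nu> (t / b') / b')"
    using s assms by (simp add: s_def powr_add)
  also have "\<dots> \<le> r powr \<nu> * (student_t_density \<nu> (t / b') / b')"
    using s assms student_t_density_nonneg[of \<nu> "t / b'"] by (intro mult_right_mono powr_mono2) auto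
  finally show ?thesis .
qed

lemma student_t_density_affine_le:
  fixes \<nu> a a' b b' r y :: real
  assumes "\<nu> \<ge> 1" "b > 0" "b' > 0" "b \<le> r * b'" "b' \<le> r * b"
  shows "student_t_density \<nu> ((y - a) / b) / b
    \<le> exp ((\<nu> + 1) / (2 * sqrt \<nu>) * (\<bar>a - a'\<bar> / b)) * r powr \<nu>
       * (student_t_density \<nu> ((y - a') / b') / b')"
proof -
  define E where "E = exp ((\<nu> + 1) / (2 * sqrt \<nu>) * (\<bar>a - a'\<bar> / b))"
  have "\<bar>(y - a) / b - (y - a') / b\<bar> = \<bar>a - a'\<bar> / b"
    using assms by (simp add: diff_divide_distrib[symmetric] abs_minus_commute)
  then have "student_t_density \<nu> ((y - a) / b) \<le> E * student_t_density \<nu> ((y - a') / b)"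
    using student_t_density_shift_le[of \<nu> "(y - a) / b" "(y - a') / b"] assms by (simp add: E_def)
  then have "student_t_density \<nu> ((y - a) / b) / b \<le> E * (student_t_density \<nu> ((y - a') / b) / b)"
    using assms by (simp add: divide_right_mono)
  also have "\<dots> \<le> E * (r powr \<nu> * (student_t_density \<nu> ((y - a') / b') / b'))"
    using student_t_density_scale_le[of \<nu> b b' r "y - a'"] assms by (intro mult_left_mono) (auto simp: E_def)
  finally show ?thesis
    by (simp add: E_def mult_ac)
qed

lemma student_t_density_le_inverse_one_plus_square:
  assumes "\<nu> \<ge> 1"
  shows "student_t_density \<nu> y \<le> student_t_const \<nu> / sqrt \<nu> * \<nu> * inverse (1 + y\<^sup>2)"
proof -
  have "(1 + y\<^sup>2 / \<nu>) powr (-(\<nu> + 1) / 2) \<le> (1 + y\<^sup>2 / \<nu>) powr (-1)"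
    using assms by (intro powr_mono) (auto simp: field_simps)
  also have "\<dots> = \<nu> / (\<nu> + y\<^sup>2)"
    using assms by (simp add: powr_minus field_simps add_pos_nonneg)
  also have "\<dots> \<le> \<nu> * inverse (1 + y\<^sup>2)"
    using assms by (simp add: field_simps add_pos_nonneg)
  finally have "(1 + y\<^sup>2 / \<nu>) powr (-(\<nu> + 1) / 2) \<le> \<nu> * inverse (1 + y\<^sup>2)" .
  moreover have "student_t_const \<nu> / sqrt \<nu> \<ge> 0"
    using student_t_const_nonneg[of \<nu>] assms by simp
  ultimately show ?thesis
    unfolding student_t_density_def by (metis mult_left_mono mult.assoc)
qed

lemma finite_measure_student_t:
  assumes "\<nu> \<ge> 1"
  shows "finite_measure (student_t \<nu>)"
proof
  define C where "C = student_t_const \<nu> / sqrt \<nu> * \<nu>"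
  have "C \<ge> 0"
    using student_t_const_nonneg assms by (simp add: C_def)
  have "integrable lborel (\<lambda>y::real. inverse (1 + y\<^sup>2))"
    using integrable_inverse_1_plus_square by (simp add: set_integrable_def einterval_eq_UNIV)
  then have cauchy_finite: "(\<integral>\<^sup>+y. ennreal (inverse (1 + y\<^sup>2)) \<partial>lborel) < \<infinity>"
    by (auto simp: top.not_eq_extremum add_pos_nonneg)
  have "emeasure (student_t \<nu>) (space (student_t \<nu>)) = (\<integral>\<^sup>+y. ennreal (student_t_density \<nu> y) \<partial>lborel)"
    unfolding student_t_def by (simp add: emeasure_density)
  also have "\<dots> \<le> (\<integral>\<^sup>+y. ennreal C * ennreal (inverse (1 + y\<^sup>2)) \<partial>lborel)"
    using student_t_density_le_inverse_one_plus_square[OF assms] \<open>C \<ge> 0\<close> unfolding C_def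
    by (intro nn_integral_mono) (simp add: ennreal_leI flip: ennreal_mult)
  also have "\<dots> = ennreal C * (\<integral>\<^sup>+y. ennreal (inverse (1 + y\<^sup>2)) \<partial>lborel)"
    by (intro nn_integral_cmult) measurable
  also have "\<dots> < \<infinity>"
    using cauchy_finite by (simp add: ennreal_mult_less_top)
  finally show "emeasure (student_t \<nu>) (space (student_t \<nu>)) \<noteq> \<infinity>" by simp
qed

lemma distr_density_lborel_real_affine:
  fixes g :: "real \<Rightarrow> ennreal" and c t :: real
  assumes [measurable]: "g \<in> borel_measurable borel" and c: "c \<noteq> 0"
  shows "distr (density lborel g) borel (\<lambda>x. t + c * x)
    = density lborel (\<lambda>y. g ((y - t) / c) / ennreal \<bar>c\<bar>)"
proof -
  have eq: "ennreal \<bar>c\<bar> * (g y / ennreal \<bar>c\<bar>) = g y" for y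
    using c by (cases "g y")
      (auto simp: divide_ennreal ennreal_mult[symmetric] ennreal_top_divide ennreal_mult_top)
  show ?thesis
    by (subst (2) lborel_real_affine[where c=c and t=t])
      (use c in \<open>simp_all add: density_density_eq density_distr field_simps eq\<close>)
qed

lemma distr_student_t_affine:
  assumes "\<nu> > 0" "b > 0"
  shows "distr (student_t \<nu>) borel (\<lambda>z. a + b * z)
    = density lborel (\<lambda>y. ennreal (student_t_density \<nu> ((y - a) / b) / b))"
  unfolding student_t_def using assms
  by (subst distr_density_lborel_real_affine)
    (auto intro!: density_cong simp: divide_ennreal student_t_density_nonneg)

lemma measure_density_le_cmult:
  fixes f g :: "'a \<Rightarrow> ennreal" and c :: real
  assumes [measurable]: "f \<in> borel_measurable M" "g \<in> borel_measurable M" "A \<in> sets M"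
    and "c \<ge> 0" "AE x in M. f x \<le> c * g x" "emeasure (density M g) A \<noteq> \<infinity>"
  shows "measure (density M f) A \<le> c * measure (density M g) A"
proof -
  have "emeasure (density M f) A = (\<integral>\<^sup>+x. f x * indicator A x \<partial>M)"
    by (simp add: emeasure_density)
  also have "\<dots> \<le> (\<integral>\<^sup>+x. ennreal c * (g x * indicator A x) \<partial>M)"
    using assms(5) by (intro nn_integral_mono_AE) (auto split: split_indicator simp: mult.assoc)
  also have "\<dots> = ennreal c * emeasure (density M g) A"
    by (simp add: emeasure_density nn_integral_cmult)
  finally have "measure (density M f) A \<le> enn2real (ennreal c * emeasure (density M g) A)"
    unfolding measure_def using assms(6) by (intro enn2real_mono) (auto simp: ennreal_mult_less_top top.not_eq_extremum)
  then show ?thesis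
    using \<open>c \<ge> 0\<close> by (simp add: enn2real_mult measure_def)
qed

lemma measure_distr_student_t_affine_le:
  fixes \<nu> a a' b b' r c :: real
  assumes "\<nu> \<ge> 1" "b \<ge> 0" "r \<ge> 1" "b \<le> r * b'" "b' \<le> r * b" "c \<ge> 0" "\<bar>a - a'\<bar> \<le> c * b"
    and S: "S \<in> sets borel"
  shows "measure (distr (student_t \<nu>) borel (\<lambda>z. a + b * z)) S
    \<le> exp ((\<nu> + 1) / (2 * sqrt \<nu>) * c) * r powr \<nu>
       * measure (distr (student_t \<nu>) borel (\<lambda>z. a' + b' * z)) S"
    (is "?M a b \<le> ?C * ?M a' b'")
proof (cases "b = 0")
  case True
  then have "b' = 0" "a' = a"
    using assms by (auto simp: zero_le_mult_iff)
  moreover have "1 \<le> ?C"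
  proof -
    have "1 \<le> exp ((\<nu> + 1) / (2 * sqrt \<nu>) * c)" "1 \<le> r powr \<nu>"
      using assms by (simp_all add: ge_one_powr_ge_zero)
    then show ?thesis
      using mult_mono[of 1 _ 1] by fastforce
  qed
  ultimately show ?thesis
    using True mult_right_mono[of 1 ?C "?M a b"] by simp
next
  case False
  then have "b > 0" "0 < r * b'"
    using assms by linarith+
  then have b: "b > 0" "b' > 0"
    using assms by (simp_all add: zero_less_mult_iff)
  have \<nu>: "\<nu> > 0"
    using assms by simp
  have "exp ((\<nu> + 1) / (2 * sqrt \<nu>) * (\<bar>a - a'\<bar> / b)) \<le> exp ((\<nu> + 1) / (2 * sqrt \<nu>) * c)"
    using assms b by (simp add: mult_left_mono divide_le_eq)
  then have density_le: "student_t_density \<nu> ((y - a) / b) / b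
      \<le> ?C * (student_t_density \<nu> ((y - a') / b') / b')" for y
  proof -
    have "student_t_density \<nu> ((y - a) / b) / b
        \<le> exp ((\<nu> + 1) / (2 * sqrt \<nu>) * (\<bar>a - a'\<bar> / b)) * r powr \<nu>
           * (student_t_density \<nu> ((y - a') / b') / b')"
      by (rule student_t_density_affine_le) (use assms b in auto)
    also have "\<dots> \<le> ?C * (student_t_density \<nu> ((y - a') / b') / b')"
      using \<open>exp _ \<le> exp _\<close> \<nu> b by (intro mult_right_mono) (auto simp: student_t_density_nonneg)
    finally show ?thesis .
  qed
  interpret finite_measure "student_t \<nu>"
    using assms(1) by (rule finite_measure_student_t)
  have "emeasure (distr (student_t \<nu>) borel (\<lambda>z. a' + b' * z)) S \<noteq> \<infinity>"
    using finite_measure.emeasure_finite[OF finite_measure_distr, of "\<lambda>z. a' + b' * z" borel S]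
    by (simp add: student_t_def)
  moreover have "AE y in lborel. ennreal (student_t_density \<nu> ((y - a) / b) / b)
      \<le> ennreal ?C * ennreal (student_t_density \<nu> ((y - a') / b') / b')"
  proof (rule AE_I2)
    fix y
    have "ennreal (student_t_density \<nu> ((y - a) / b) / b)
        \<le> ennreal (?C * (student_t_density \<nu> ((y - a') / b') / b'))"
      using density_le by (rule ennreal_leI)
    also have "\<dots> = ennreal ?C * ennreal (student_t_density \<nu> ((y - a') / b') / b')"
      by (rule ennreal_mult') simp
    finally show "ennreal (student_t_density \<nu> ((y - a) / b) / b)
        \<le> ennreal ?C * ennreal (student_t_density \<nu> ((y - a') / b') / b')" .
  qed
  ultimately show ?thesis
    unfolding distr_student_t_affine[OF \<nu> b(1)] distr_student_t_affine[OF \<nu> b(2)] using S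
    by (intro measure_density_le_cmult) auto
qed

lemma local_lip_le_imp_abs_diff_le:
  assumes lip: "local_lip U f Lam x \<le> ereal K" and x': "x' \<in> U" and near: "ereal (dist x x') \<le> Lam"
  shows "\<bar>f x - f x'\<bar> \<le> K * dist x x'"
proof (cases "dist x x' = 0")
  case False
  then have pos: "dist x x' > 0"
    by simp
  have bound: "\<bar>f x - f x'\<bar> / dist x x' \<le> K'" if "K < K'" for K'
  proof -
    have "local_lip U f Lam x < ereal K'"
      using lip that by (simp add: order.strict_trans1)
    then obtain L where "L < K'"
      and L: "\<forall>x'\<in>U. ereal (dist x x') \<le> Lam \<longrightarrow> \<bar>f x - f x'\<bar> \<le> L * dist x x'"
      unfolding local_lip_def Inf_less_iff by auto
    have "\<bar>f x - f x'\<bar> \<le> L * dist x x'"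
      using L x' near by blast
    also have "\<dots> \<le> K' * dist x x'"
      using \<open>L < K'\<close> by (intro mult_right_mono) auto
    finally show ?thesis
      using pos by (simp add: pos_divide_le_eq)
  qed
  have "\<bar>f x - f x'\<bar> / dist x x' \<le> K"
    by (rule dense_ge) (rule bound)
  then show ?thesis
    using pos by (simp add: pos_divide_le_eq)
qed simp

theorem mainTheorem5:
  fixes U :: "'a::metric_space set"
    and f B :: "'a \<Rightarrow> real"
    and \<gamma> \<eta> \<nu> :: real
    and Lam :: ereal
  assumes "\<gamma> > 0" and "\<eta> > 0" and "Lam > 0" and "\<nu> > 1"
    and "smooth_upper_bound U (\<lambda>x x'. exp (\<gamma> * dist x x')) f Lam B"
  shows "GP U (t_mechanism f B \<eta> \<nu>)
            (\<nu> * \<gamma> + (\<nu> + 1) / (2 * sqrt \<nu>) * \<eta>) 0 Lam"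
  unfolding GP_def t_mechanism_def
proof (intro ballI impI)
  fix S :: "real set" and x x'
  assume S: "S \<in> sets borel" and x: "x \<in> U" and x': "x' \<in> U" and near: "ereal (dist x x') \<le> Lam"
  define d where "d = dist x x'"
  have B: "0 \<le> B x" "B x \<le> exp (\<gamma> * d) * B x'" "B x' \<le> exp (\<gamma> * d) * B x"
    and lip: "local_lip U f Lam x \<le> ereal (B x)"
    using assms(5) x x' by (auto simp: smooth_upper_bound_def d_def dist_commute)
  have "\<bar>f x - f x'\<bar> \<le> (\<eta> * d) * (B x / \<eta>)"
    using local_lip_le_imp_abs_diff_le[OF lip x' near] assms by (simp add: d_def mult.commute)
  then have "measure (distr (student_t \<nu>) borel (\<lambda>z. f x + B x / \<eta> * z)) S
      \<le> exp ((\<nu> + 1) / (2 * sqrt \<nu>) * (\<eta> * d)) * exp (\<gamma> * d) powr \<nu>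
         * measure (distr (student_t \<nu>) borel (\<lambda>z. f x' + B x' / \<eta> * z)) S"
    using B assms S by (intro measure_distr_student_t_affine_le) (auto simp: d_def divide_right_mono)
  also have "exp ((\<nu> + 1) / (2 * sqrt \<nu>) * (\<eta> * d)) * exp (\<gamma> * d) powr \<nu>
      = exp ((\<nu> * \<gamma> + (\<nu> + 1) / (2 * sqrt \<nu>) * \<eta>) * d)"
    by (simp add: exp_powr_real flip: exp_add) (simp add: algebra_simps)
  finally show "measure (distr (student_t \<nu>) borel (\<lambda>z. f x + B x / \<eta> * z)) S
      \<le> exp ((\<nu> * \<gamma> + (\<nu> + 1) / (2 * sqrt \<nu>) * \<eta>) * dist x x')
         * measure (distr (student_t \<nu>) borel (\<lambda>z. f x' + B x' / \<eta> * z)) S + 0"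
    by (simp add: d_def)
qed

end
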